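(* Let $E_1,E_2$ be vector bundles over $M$ with connections $D_1,D_2$ and let $(E,D)=(E_1\oplus E_2,D_1+D_2)$. Then $D$ is exact if and only if $D_1$ and $D_2$ are both exact.
   Context: For a connection $D$ on $E$: $D^\wedge$ is the exterior covariant derivative $\phi_b{}^\alpha\mapsto D_{[a}\phi_{b]}{}^\alpha$, $\kappa=D^\wedge\circ D$ the curvature (assumed of constant rank). $D$ is exact if every section $\phi$ of $\Lambda^1\otimes E$ with $D^\wedge\phi=\kappa(\psi)$ for some section $\psi$ of $E$ is of the form $D\eta$ for some section $\eta$ of $E$. Statements are local. *)

theory Defs
  imports "HOL-Analysis.Analysis"
begin

text \<open>Local setting: an open coordinate patch U of real^'n over which the bundles are
trivialised; a section of a rank-r bundle is a map real^'n => real^'r (only values on U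
matter), an E-valued 1-form phi has components phi x $ b $ alpha, an E-valued 2-form has
components w x $ a $ b $ alpha, and a connection is D = d + Gamma with connection
coefficients Gamma x $ b $ alpha $ beta.\<close>

definition pd :: "'n::finite \<Rightarrow> (real^'n \<Rightarrow> real) \<Rightarrow> real^'n \<Rightarrow> real" where
  "pd i f x = deriv (\<lambda>t. f (x + t *\<^sub>R axis i 1)) 0"

fun Ck :: "nat \<Rightarrow> (real^'n::finite) set \<Rightarrow> (real^'n \<Rightarrow> real) \<Rightarrow> bool" where
  "Ck 0 U f = continuous_on U f"
| "Ck (Suc k) U f = (continuous_on U f \<and>
     (\<forall>i. (\<forall>x\<in>U. ((\<lambda>t. f (x + t *\<^sub>R axis i 1)) has_real_derivative pd i f x) (at 0))
          \<and> Ck k U (pd i f)))"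

definition smooth_fun :: "(real^'n::finite) set \<Rightarrow> (real^'n \<Rightarrow> real) \<Rightarrow> bool" where
  "smooth_fun U f = (\<forall>k. Ck k U f)"

definition smooth_sec :: "(real^'n::finite) set \<Rightarrow> (real^'n \<Rightarrow> real^'r::finite) \<Rightarrow> bool" where
  "smooth_sec U s = (\<forall>\<alpha>. smooth_fun U (\<lambda>x. s x $ \<alpha>))"

definition smooth_form :: "(real^'n::finite) set \<Rightarrow> (real^'n \<Rightarrow> real^'r::finite^'n) \<Rightarrow> bool" where
  "smooth_form U \<phi> = (\<forall>b \<alpha>. smooth_fun U (\<lambda>x. \<phi> x $ b $ \<alpha>))"

definition smooth_conn :: "(real^'n::finite) set \<Rightarrow> (real^'n \<Rightarrow> real^'r::finite^'r^'n) \<Rightarrow> bool" where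
  "smooth_conn U \<Gamma> = (\<forall>b \<alpha> \<beta>. smooth_fun U (\<lambda>x. \<Gamma> x $ b $ \<alpha> $ \<beta>))"

definition cov :: "(real^'n::finite \<Rightarrow> real^'r::finite^'r^'n) \<Rightarrow> (real^'n \<Rightarrow> real^'r) \<Rightarrow> real^'n \<Rightarrow> real^'r^'n" where
  "cov \<Gamma> \<eta> x = (\<chi> b \<alpha>. pd b (\<lambda>y. \<eta> y $ \<alpha>) x + (\<Sum>\<beta>\<in>UNIV. \<Gamma> x $ b $ \<alpha> $ \<beta> * \<eta> x $ \<beta>))"

definition ext_cov :: "(real^'n::finite \<Rightarrow> real^'r::finite^'r^'n) \<Rightarrow> (real^'n \<Rightarrow> real^'r^'n) \<Rightarrow> real^'n \<Rightarrow> real^'r^'n^'n" where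
  "ext_cov \<Gamma> \<phi> x = (\<chi> a b \<alpha>. (1/2) *
      ((pd a (\<lambda>y. \<phi> y $ b $ \<alpha>) x + (\<Sum>\<beta>\<in>UNIV. \<Gamma> x $ a $ \<alpha> $ \<beta> * \<phi> x $ b $ \<beta>))
     - (pd b (\<lambda>y. \<phi> y $ a $ \<alpha>) x + (\<Sum>\<beta>\<in>UNIV. \<Gamma> x $ b $ \<alpha> $ \<beta> * \<phi> x $ a $ \<beta>))))"

definition curv :: "(real^'n::finite \<Rightarrow> real^'r::finite^'r^'n) \<Rightarrow> (real^'n \<Rightarrow> real^'r) \<Rightarrow> real^'n \<Rightarrow> real^'r^'n^'n" where
  "curv \<Gamma> \<psi> = ext_cov \<Gamma> (cov \<Gamma> \<psi>)"

text \<open>Rank of the curvature (a bundle map E -> Lambda^2 (x) E) at a point x of U.\<close>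
definition curv_rank :: "(real^'n::finite) set \<Rightarrow> (real^'n \<Rightarrow> real^'r::finite^'r^'n) \<Rightarrow> real^'n \<Rightarrow> nat" where
  "curv_rank U \<Gamma> x = dim {curv \<Gamma> \<psi> x | \<psi>. smooth_sec U \<psi>}"

definition curv_const_rank :: "(real^'n::finite) set \<Rightarrow> (real^'n \<Rightarrow> real^'r::finite^'r^'n) \<Rightarrow> bool" where
  "curv_const_rank U \<Gamma> = (\<forall>x\<in>U. \<forall>y\<in>U. curv_rank U \<Gamma> x = curv_rank U \<Gamma> y)"

definition exact_conn :: "(real^'n::finite) set \<Rightarrow> (real^'n \<Rightarrow> real^'r::finite^'r^'n) \<Rightarrow> bool" where
  "exact_conn U \<Gamma> = (\<forall>x\<in>U. \<forall>V. open V \<and> x \<in> V \<and> V \<subseteq> U \<longrightarrow>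
     (\<forall>\<phi> \<psi>. smooth_form V \<phi> \<and> smooth_sec V \<psi> \<and> (\<forall>y\<in>V. ext_cov \<Gamma> \<phi> y = curv \<Gamma> \<psi> y) \<longrightarrow>
        (\<exists>W \<eta>. open W \<and> x \<in> W \<and> W \<subseteq> V \<and> smooth_sec W \<eta> \<and> (\<forall>y\<in>W. cov \<Gamma> \<eta> y = \<phi> y))))"

definition conn_sum :: "(real^'n::finite \<Rightarrow> real^'r::finite^'r^'n) \<Rightarrow> (real^'n \<Rightarrow> real^'s::finite^'s^'n)
    \<Rightarrow> real^'n \<Rightarrow> real^('r + 's)^('r + 's)^'n" where
  "conn_sum \<Gamma>1 \<Gamma>2 x = (\<chi> b \<alpha> \<beta>. (case (\<alpha>, \<beta>) of
        (Inl i, Inl j) \<Rightarrow> \<Gamma>1 x $ b $ i $ j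
      | (Inr i, Inr j) \<Rightarrow> \<Gamma>2 x $ b $ i $ j
      | _ \<Rightarrow> 0))"

end

theory Submission
  imports Defs
begin

text \<open>The coefficients of D = D_1 + D_2 are block diagonal, so D, D^wedge and kappa act
componentwise on E_1 (+) E_2: the equation D^wedge phi = kappa(psi) splits into the two
equations for the components of phi and psi, and phi = D eta splits likewise. If both
summands are exact, the potentials of the two components, taken on the intersection of
their neighbourhoods, form a potential of phi. Conversely, a solution of
D_1^wedge phi_1 = kappa_1(psi_1) padded by zero is a solution for D, and the first
component of a potential for the padded form is a potential for phi_1.\<close>

lemma pd_const [simp]: "pd i (\<lambda>_. c) = (\<lambda>_. 0)"
  by (simp add: pd_def fun_eq_iff)

lemma Ck_const: "Ck k U (\<lambda>_. c)"
  by (induction k arbitrary: c) auto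

lemma Ck_subset: "Ck k U f \<Longrightarrow> W \<subseteq> U \<Longrightarrow> Ck k W f"
  by (induction k arbitrary: f) (auto intro: continuous_on_subset)

lemma smooth_sec_zero: "smooth_sec U (\<lambda>_. 0)"
  by (simp add: smooth_sec_def smooth_fun_def Ck_const)

lemma smooth_form_zero: "smooth_form U (\<lambda>_. 0)"
  by (simp add: smooth_form_def smooth_fun_def Ck_const)

lemma smooth_sec_subset: "smooth_sec U \<eta> \<Longrightarrow> W \<subseteq> U \<Longrightarrow> smooth_sec W \<eta>"
  unfolding smooth_sec_def smooth_fun_def using Ck_subset by blast

lemma cov_zero [simp]: "cov \<Gamma> (\<lambda>_. 0) = (\<lambda>_. 0)"
  by (simp add: fun_eq_iff cov_def vec_eq_iff)

lemma ext_cov_zero [simp]: "ext_cov \<Gamma> (\<lambda>_. 0) = (\<lambda>_. 0)"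
  by (simp add: fun_eq_iff ext_cov_def vec_eq_iff)

lemma curv_zero [simp]: "curv \<Gamma> (\<lambda>_. 0) = (\<lambda>_. 0)"
  by (simp add: curv_def)

definition curv_closed ::
    "(real^'n::finite \<Rightarrow> real^'r::finite^'r^'n) \<Rightarrow> (real^'n) set \<Rightarrow> (real^'n \<Rightarrow> real^'r^'n)
      \<Rightarrow> (real^'n \<Rightarrow> real^'r) \<Rightarrow> bool" where
  "curv_closed \<Gamma> V \<phi> \<psi> \<longleftrightarrow>
     smooth_form V \<phi> \<and> smooth_sec V \<psi> \<and> (\<forall>y\<in>V. ext_cov \<Gamma> \<phi> y = curv \<Gamma> \<psi> y)"

definition locally_cov_exact ::
    "(real^'n::finite \<Rightarrow> real^'r::finite^'r^'n) \<Rightarrow> real^'n \<Rightarrow> (real^'n) set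
      \<Rightarrow> (real^'n \<Rightarrow> real^'r^'n) \<Rightarrow> bool" where
  "locally_cov_exact \<Gamma> x V \<phi> \<longleftrightarrow>
     (\<exists>W \<eta>. open W \<and> x \<in> W \<and> W \<subseteq> V \<and> smooth_sec W \<eta> \<and> (\<forall>y\<in>W. cov \<Gamma> \<eta> y = \<phi> y))"

lemma exact_conn_iff:
  "exact_conn U \<Gamma> \<longleftrightarrow> (\<forall>x\<in>U. \<forall>V. open V \<and> x \<in> V \<and> V \<subseteq> U \<longrightarrow>
     (\<forall>\<phi> \<psi>. curv_closed \<Gamma> V \<phi> \<psi> \<longrightarrow> locally_cov_exact \<Gamma> x V \<phi>))"
  by (simp add: exact_conn_def curv_closed_def locally_cov_exact_def)

lemma exact_connD:
  assumes "exact_conn U \<Gamma>" "x \<in> U" "open V" "x \<in> V" "V \<subseteq> U" "curv_closed \<Gamma> V \<phi> \<psi>"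
  shows "locally_cov_exact \<Gamma> x V \<phi>"
  using assms unfolding exact_conn_iff by blast

lemma curv_closed_zero: "curv_closed \<Gamma> V (\<lambda>_. 0) (\<lambda>_. 0)"
  by (simp add: curv_closed_def smooth_form_zero smooth_sec_zero)

definition sec_pair :: "('x \<Rightarrow> 'a^'r::finite) \<Rightarrow> ('x \<Rightarrow> 'a^'s::finite) \<Rightarrow> 'x \<Rightarrow> 'a^('r + 's)" where
  "sec_pair \<eta>1 \<eta>2 y = (\<chi> \<beta>. case \<beta> of Inl \<alpha> \<Rightarrow> \<eta>1 y $ \<alpha> | Inr \<alpha> \<Rightarrow> \<eta>2 y $ \<alpha>)"

definition sec_fst :: "('x \<Rightarrow> 'a^('r::finite + 's::finite)) \<Rightarrow> 'x \<Rightarrow> 'a^'r" where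
  "sec_fst \<eta> y = (\<chi> \<alpha>. \<eta> y $ Inl \<alpha>)"

definition sec_snd :: "('x \<Rightarrow> 'a^('r::finite + 's::finite)) \<Rightarrow> 'x \<Rightarrow> 'a^'s" where
  "sec_snd \<eta> y = (\<chi> \<alpha>. \<eta> y $ Inr \<alpha>)"

definition form_pair ::
    "('x \<Rightarrow> 'a^'r::finite^'n::finite) \<Rightarrow> ('x \<Rightarrow> 'a^'s::finite^'n) \<Rightarrow> 'x \<Rightarrow> 'a^('r + 's)^'n" where
  "form_pair \<phi>1 \<phi>2 y = (\<chi> b. sec_pair (\<lambda>y. \<phi>1 y $ b) (\<lambda>y. \<phi>2 y $ b) y)"

definition form_fst :: "('x \<Rightarrow> 'a^('r::finite + 's::finite)^'n::finite) \<Rightarrow> 'x \<Rightarrow> 'a^'r^'n" where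
  "form_fst \<phi> y = (\<chi> b. sec_fst (\<lambda>y. \<phi> y $ b) y)"

definition form_snd :: "('x \<Rightarrow> 'a^('r::finite + 's::finite)^'n::finite) \<Rightarrow> 'x \<Rightarrow> 'a^'s^'n" where
  "form_snd \<phi> y = (\<chi> b. sec_snd (\<lambda>y. \<phi> y $ b) y)"

definition form2_pair :: "('x \<Rightarrow> 'a^'r::finite^'n::finite^'m::finite) \<Rightarrow> ('x \<Rightarrow> 'a^'s::finite^'n^'m)
    \<Rightarrow> 'x \<Rightarrow> 'a^('r + 's)^'n^'m" where
  "form2_pair \<omega>1 \<omega>2 y = (\<chi> a. form_pair (\<lambda>y. \<omega>1 y $ a) (\<lambda>y. \<omega>2 y $ a) y)"

lemma sec_pair_nth_Inl [simp]: "sec_pair \<eta>1 \<eta>2 y $ Inl \<alpha> = \<eta>1 y $ \<alpha>"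
  by (simp add: sec_pair_def)

lemma sec_pair_nth_Inr [simp]: "sec_pair \<eta>1 \<eta>2 y $ Inr \<alpha> = \<eta>2 y $ \<alpha>"
  by (simp add: sec_pair_def)

lemma form_pair_nth_Inl [simp]: "form_pair \<phi>1 \<phi>2 y $ b $ Inl \<alpha> = \<phi>1 y $ b $ \<alpha>"
  by (simp add: form_pair_def)

lemma form_pair_nth_Inr [simp]: "form_pair \<phi>1 \<phi>2 y $ b $ Inr \<alpha> = \<phi>2 y $ b $ \<alpha>"
  by (simp add: form_pair_def)

lemma form2_pair_nth_Inl [simp]: "form2_pair \<omega>1 \<omega>2 y $ a $ b $ Inl \<alpha> = \<omega>1 y $ a $ b $ \<alpha>"
  by (simp add: form2_pair_def)

lemma form2_pair_nth_Inr [simp]: "form2_pair \<omega>1 \<omega>2 y $ a $ b $ Inr \<alpha> = \<omega>2 y $ a $ b $ \<alpha>"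
  by (simp add: form2_pair_def)

lemma sec_fst_nth [simp]: "sec_fst \<eta> y $ \<alpha> = \<eta> y $ Inl \<alpha>"
  by (simp add: sec_fst_def)

lemma sec_snd_nth [simp]: "sec_snd \<eta> y $ \<alpha> = \<eta> y $ Inr \<alpha>"
  by (simp add: sec_snd_def)

lemma form_fst_nth [simp]: "form_fst \<phi> y $ b $ \<alpha> = \<phi> y $ b $ Inl \<alpha>"
  by (simp add: form_fst_def)

lemma form_snd_nth [simp]: "form_snd \<phi> y $ b $ \<alpha> = \<phi> y $ b $ Inr \<alpha>"
  by (simp add: form_snd_def)

lemma sec_fst_pair [simp]: "sec_fst (sec_pair \<eta>1 \<eta>2) = \<eta>1"
  by (simp add: fun_eq_iff vec_eq_iff)

lemma sec_snd_pair [simp]: "sec_snd (sec_pair \<eta>1 \<eta>2) = \<eta>2"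
  by (simp add: fun_eq_iff vec_eq_iff)

lemma form_fst_pair [simp]: "form_fst (form_pair \<phi>1 \<phi>2) = \<phi>1"
  by (simp add: fun_eq_iff vec_eq_iff)

lemma form_snd_pair [simp]: "form_snd (form_pair \<phi>1 \<phi>2) = \<phi>2"
  by (simp add: fun_eq_iff vec_eq_iff)

lemma form_pair_fst_snd [simp]: "form_pair (form_fst \<phi>) (form_snd \<phi>) = \<phi>"
  by (simp add: fun_eq_iff vec_eq_iff split_sum_all)

lemma form_pair_eq_iff:
  "form_pair \<phi>1 \<phi>2 y = form_pair \<phi>1' \<phi>2' y \<longleftrightarrow> \<phi>1 y = \<phi>1' y \<and> \<phi>2 y = \<phi>2' y"
  by (auto simp: vec_eq_iff split_sum_all)

lemma form2_pair_eq_iff: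
  "form2_pair \<omega>1 \<omega>2 y = form2_pair \<omega>1' \<omega>2' y \<longleftrightarrow> \<omega>1 y = \<omega>1' y \<and> \<omega>2 y = \<omega>2' y"
  by (auto simp: vec_eq_iff split_sum_all)

lemma smooth_sec_iff_fst_snd:
  "smooth_sec V \<eta> \<longleftrightarrow> smooth_sec V (sec_fst \<eta>) \<and> smooth_sec V (sec_snd \<eta>)"
  by (simp add: smooth_sec_def split_sum_all)

lemma smooth_form_iff_fst_snd:
  "smooth_form V \<phi> \<longleftrightarrow> smooth_form V (form_fst \<phi>) \<and> smooth_form V (form_snd \<phi>)"
  by (auto simp: smooth_form_def split_sum_all)

lemma sum_UNIV_sum_type: "sum f (UNIV :: ('a::finite + 'b::finite) set) = sum (f \<circ> Inl) UNIV + sum (f \<circ> Inr) UNIV"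
  by (metis UNIV_Plus_UNIV finite sum.Plus)

lemma cov_conn_sum:
  "cov (conn_sum \<Gamma>1 \<Gamma>2) \<eta> = form_pair (cov \<Gamma>1 (sec_fst \<eta>)) (cov \<Gamma>2 (sec_snd \<eta>))"
  by (simp add: fun_eq_iff vec_eq_iff split_sum_all cov_def conn_sum_def sum_UNIV_sum_type)

lemma ext_cov_conn_sum:
  "ext_cov (conn_sum \<Gamma>1 \<Gamma>2) \<phi> = form2_pair (ext_cov \<Gamma>1 (form_fst \<phi>)) (ext_cov \<Gamma>2 (form_snd \<phi>))"
  by (simp add: fun_eq_iff vec_eq_iff split_sum_all ext_cov_def conn_sum_def sum_UNIV_sum_type)

lemma curv_conn_sum:
  "curv (conn_sum \<Gamma>1 \<Gamma>2) \<psi> = form2_pair (curv \<Gamma>1 (sec_fst \<psi>)) (curv \<Gamma>2 (sec_snd \<psi>))"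
  by (simp add: curv_def cov_conn_sum ext_cov_conn_sum)

lemma curv_closed_conn_sum_iff:
  "curv_closed (conn_sum \<Gamma>1 \<Gamma>2) V \<phi> \<psi> \<longleftrightarrow>
     curv_closed \<Gamma>1 V (form_fst \<phi>) (sec_fst \<psi>) \<and> curv_closed \<Gamma>2 V (form_snd \<phi>) (sec_snd \<psi>)"
  by (auto simp: curv_closed_def ext_cov_conn_sum curv_conn_sum form2_pair_eq_iff
      smooth_sec_iff_fst_snd[of V \<psi>] smooth_form_iff_fst_snd[of V \<phi>])

lemma locally_cov_exact_conn_sum_iff:
  "locally_cov_exact (conn_sum \<Gamma>1 \<Gamma>2) x V \<phi> \<longleftrightarrow>
     locally_cov_exact \<Gamma>1 x V (form_fst \<phi>) \<and> locally_cov_exact \<Gamma>2 x V (form_snd \<phi>)"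
proof -
  have cov_eq_iff: "cov (conn_sum \<Gamma>1 \<Gamma>2) \<eta> y = \<phi> y \<longleftrightarrow>
      cov \<Gamma>1 (sec_fst \<eta>) y = form_fst \<phi> y \<and> cov \<Gamma>2 (sec_snd \<eta>) y = form_snd \<phi> y" for \<eta> y
    by (simp only: cov_conn_sum form_pair_eq_iff[symmetric] form_pair_fst_snd)
  show ?thesis
  proof
    assume "locally_cov_exact (conn_sum \<Gamma>1 \<Gamma>2) x V \<phi>"
    then obtain W \<eta> where "open W" "x \<in> W" "W \<subseteq> V" "smooth_sec W \<eta>"
      and "\<forall>y\<in>W. cov (conn_sum \<Gamma>1 \<Gamma>2) \<eta> y = \<phi> y"
      by (auto simp: locally_cov_exact_def)
    then have "open W \<and> x \<in> W \<and> W \<subseteq> V \<and> smooth_sec W (sec_fst \<eta>) \<and> smooth_sec W (sec_snd \<eta>) \<and>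
        (\<forall>y\<in>W. cov \<Gamma>1 (sec_fst \<eta>) y = form_fst \<phi> y \<and> cov \<Gamma>2 (sec_snd \<eta>) y = form_snd \<phi> y)"
      by (simp add: cov_eq_iff flip: smooth_sec_iff_fst_snd)
    then show "locally_cov_exact \<Gamma>1 x V (form_fst \<phi>) \<and> locally_cov_exact \<Gamma>2 x V (form_snd \<phi>)"
      unfolding locally_cov_exact_def by blast
  next
    assume "locally_cov_exact \<Gamma>1 x V (form_fst \<phi>) \<and> locally_cov_exact \<Gamma>2 x V (form_snd \<phi>)"
    then obtain W1 \<eta>1 W2 \<eta>2 where
      W1: "open W1" "x \<in> W1" "W1 \<subseteq> V" "smooth_sec W1 \<eta>1" "\<forall>y\<in>W1. cov \<Gamma>1 \<eta>1 y = form_fst \<phi> y" and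
      W2: "open W2" "x \<in> W2" "W2 \<subseteq> V" "smooth_sec W2 \<eta>2" "\<forall>y\<in>W2. cov \<Gamma>2 \<eta>2 y = form_snd \<phi> y"
      by (auto simp: locally_cov_exact_def)
    have "smooth_sec (W1 \<inter> W2) (sec_pair \<eta>1 \<eta>2)"
      using W1(4) W2(4) by (simp add: smooth_sec_iff_fst_snd smooth_sec_subset)
    with W1 W2 show "locally_cov_exact (conn_sum \<Gamma>1 \<Gamma>2) x V \<phi>"
      unfolding locally_cov_exact_def
      by (intro exI[of _ "W1 \<inter> W2"] exI[of _ "sec_pair \<eta>1 \<eta>2"]) (auto simp: cov_eq_iff)
  qed
qed

lemma exact_conn_conn_sum_iff:
  "exact_conn U (conn_sum \<Gamma>1 \<Gamma>2) \<longleftrightarrow> exact_conn U \<Gamma>1 \<and> exact_conn U \<Gamma>2"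
proof
  assume sum_exact: "exact_conn U (conn_sum \<Gamma>1 \<Gamma>2)"
  show "exact_conn U \<Gamma>1 \<and> exact_conn U \<Gamma>2"
    unfolding exact_conn_iff
  proof (intro conjI ballI allI impI; elim conjE)
    fix x V \<phi>1 \<psi>1
    assume x: "x \<in> U" and V: "open V" "x \<in> V" "V \<subseteq> U" and "curv_closed \<Gamma>1 V \<phi>1 \<psi>1"
    then have "curv_closed (conn_sum \<Gamma>1 \<Gamma>2) V (form_pair \<phi>1 (\<lambda>_. 0)) (sec_pair \<psi>1 (\<lambda>_. 0))"
      by (simp add: curv_closed_conn_sum_iff curv_closed_zero)
    then have "locally_cov_exact (conn_sum \<Gamma>1 \<Gamma>2) x V (form_pair \<phi>1 (\<lambda>_. 0))"
      by (rule exact_connD[OF sum_exact x V])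
    then show "locally_cov_exact \<Gamma>1 x V \<phi>1"
      by (simp add: locally_cov_exact_conn_sum_iff)
  next
    fix x V \<phi>2 \<psi>2
    assume x: "x \<in> U" and V: "open V" "x \<in> V" "V \<subseteq> U" and "curv_closed \<Gamma>2 V \<phi>2 \<psi>2"
    then have "curv_closed (conn_sum \<Gamma>1 \<Gamma>2) V (form_pair (\<lambda>_. 0) \<phi>2) (sec_pair (\<lambda>_. 0) \<psi>2)"
      by (simp add: curv_closed_conn_sum_iff curv_closed_zero)
    then have "locally_cov_exact (conn_sum \<Gamma>1 \<Gamma>2) x V (form_pair (\<lambda>_. 0) \<phi>2)"
      by (rule exact_connD[OF sum_exact x V])
    then show "locally_cov_exact \<Gamma>2 x V \<phi>2"
      by (simp add: locally_cov_exact_conn_sum_iff)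
  qed
next
  assume "exact_conn U \<Gamma>1 \<and> exact_conn U \<Gamma>2"
  then have exact1: "exact_conn U \<Gamma>1" and exact2: "exact_conn U \<Gamma>2" by simp_all
  show "exact_conn U (conn_sum \<Gamma>1 \<Gamma>2)"
    unfolding exact_conn_iff
  proof (intro ballI allI impI, elim conjE)
    fix x V \<phi> \<psi>
    assume x: "x \<in> U" and V: "open V" "x \<in> V" "V \<subseteq> U"
      and "curv_closed (conn_sum \<Gamma>1 \<Gamma>2) V \<phi> \<psi>"
    then have closed1: "curv_closed \<Gamma>1 V (form_fst \<phi>) (sec_fst \<psi>)"
      and closed2: "curv_closed \<Gamma>2 V (form_snd \<phi>) (sec_snd \<psi>)"
      by (simp_all add: curv_closed_conn_sum_iff)
    have "locally_cov_exact \<Gamma>1 x V (form_fst \<phi>)"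
      using closed1 by (rule exact_connD[OF exact1 x V])
    moreover have "locally_cov_exact \<Gamma>2 x V (form_snd \<phi>)"
      using closed2 by (rule exact_connD[OF exact2 x V])
    ultimately show "locally_cov_exact (conn_sum \<Gamma>1 \<Gamma>2) x V \<phi>"
      by (simp add: locally_cov_exact_conn_sum_iff)
  qed
qed

theorem proposition2p6:
  fixes U :: "(real^'n::finite) set"
    and \<Gamma>1 :: "real^'n \<Rightarrow> real^'r::finite^'r^'n"
    and \<Gamma>2 :: "real^'n \<Rightarrow> real^'s::finite^'s^'n"
  assumes "open U"
    and "smooth_conn U \<Gamma>1" and "smooth_conn U \<Gamma>2"
    and "curv_const_rank U \<Gamma>1" and "curv_const_rank U \<Gamma>2"
  shows "exact_conn U (conn_sum \<Gamma>1 \<Gamma>2) \<longleftrightarrow> exact_conn U \<Gamma>1 \<and> exact_conn U \<Gamma>2"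
  by (rule exact_conn_conn_sum_iff)

end
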